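(* In the setting of the context, run top-$k$ constrained beam search ($k$-CBS) with beam width $B$ and let $C_T$ be its final (unpruned) candidate set, and let $F_{(B)}\subseteq C_T$ be the (at most) $B$ pairs of $C_T$ with the largest second coordinate (deterministic tie-breaking). For $\mathsf{dist}\in\{\mathsf{Hamming},\mathsf{Levenshtein}\}$ and $\varepsilon\ge0$ define $$\mathrm{LB}^{(Bk)}_{\varepsilon,\mathsf{dist}}=\sum_{(\mathbf{z}_{\mathrm{pre}}\Vert\mathbf{x},\,\ell)\in C_T\,:\,\mathbf{x}\in\mathbb{B}^{\mathsf{dist}}_{\varepsilon}(\mathbf{z}_{\mathrm{suf}})}\exp(\ell),\qquad \mathrm{LB}^{(B)}_{\varepsilon,\mathsf{dist}}=\sum_{(\mathbf{z}_{\mathrm{pre}}\Vert\mathbf{x},\,\ell)\in F_{(B)}\,:\,\mathbf{x}\in\mathbb{B}^{\mathsf{dist}}_{\varepsilon}(\mathbf{z}_{\mathrm{suf}})}\exp(\ell).$$ Then $\mathrm{LB}^{(Bk)}_{\varepsilon,\mathsf{dist}}\le p^{\mathsf{dist}}_{\mathbf{z},\varepsilon}$ and $\mathrm{LB}^{(B)}_{\varepsilon,\mathsf{dist}}\le\mathrm{LB}^{(Bk)}_{\varepsilon,\mathsf{dist}}$.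
   Context: Let $\mathbb{V}$ be a finite vocabulary containing a designated end-of-sequence token EOS. A language model $\theta$ assigns to every finite token sequence (history) $\mathbf{h}$ a probability distribution $\Pr_\theta(\cdot\mid\mathbf{h})$ on $\mathbb{V}$ with $\Pr_\theta(v\mid\mathbf{h})>0$ for all $v$. For an integer $k\ge1$ and a history $\mathbf{h}$, let $S(\mathbf{h})\subseteq\mathbb{V}$ be the set of $k$ tokens with the largest values of $\Pr_\theta(\cdot\mid\mathbf{h})$ (ties broken by a fixed deterministic rule). The top-$k$ decoding distribution is $\Pr_{\theta,\phi}(v\mid\mathbf{h})=\Pr_\theta(v\mid\mathbf{h})/\sum_{u\in S(\mathbf{h})}\Pr_\theta(u\mid\mathbf{h})$ for $v\in S(\mathbf{h})$ and $0$ otherwise. Fix a prefix $\mathbf{z}_{\mathrm{pre}}\in\mathbb{V}^L$ and a target suffix $\mathbf{z}_{\mathrm{suf}}\in\mathbb{V}^T$. For $\mathbf{x}\in\mathbb{V}^T$, $\Pr_{\theta,\phi}(\mathbf{x}\mid\mathbf{z}_{\mathrm{pre}})=\prod_{t=1}^T\Pr_{\theta,\phi}(x_t\mid\mathbf{z}_{\mathrm{pre}}\Vert x_{1:t-1})$ ($\Vert$ is concatenation). For $\mathbf{b},\mathbf{c}\in\mathbb{V}^T$, $\mathsf{Hamming}(\mathbf{b},\mathbf{c})=\#\{t: b_t\ne c_t\}$ and $\mathsf{Levenshtein}(\mathbf{b},\mathbf{c})$ is the minimum number of unit-cost single-token substitutions, insertions and deletions transforming $\mathbf{b}$ into $\mathbf{c}$.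 The $\varepsilon$-ball is $\mathbb{B}^{\mathsf{dist}}_{\varepsilon}(\mathbf{z}_{\mathrm{suf}})=\{\mathbf{v}\in\mathbb{V}^T:\mathsf{dist}(\mathbf{v},\mathbf{z}_{\mathrm{suf}})\le\varepsilon\}$, and $p^{\mathsf{dist}}_{\mathbf{z},\varepsilon}=\sum_{\mathbf{v}\in\mathbb{B}^{\mathsf{dist}}_{\varepsilon}(\mathbf{z}_{\mathrm{suf}})}\Pr_{\theta,\phi}(\mathbf{v}\mid\mathbf{z}_{\mathrm{pre}})$. $k$-CBS with beam width $B$: set $L_0=\{(\mathbf{z}_{\mathrm{pre}},0)\}$. For $t=1,\dots,T$: let $C_t=\{(\mathbf{h}\Vert v,\ \ell+\log\Pr_{\theta,\phi}(v\mid\mathbf{h})):(\mathbf{h},\ell)\in L_{t-1},\ v\in S(\mathbf{h})\}$. If $t=T$, output $C_T$. If $t<T$, delete from $C_t$ every pair whose history ends in EOS, and let $L_t$ be the (at most) $B$ pairs of $C_t$ with the largest second coordinate (deterministic tie-breaking). Every pair in $C_T$ has the form $(\mathbf{z}_{\mathrm{pre}}\Vert\mathbf{x},\ell)$ with $\mathbf{x}\in\mathbb{V}^T$. *)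

theory Defs
  imports Main "HOL-Library.FuncSet" Complex_Main
begin

definition lang_model :: "('v::finite list \<Rightarrow> 'v \<Rightarrow> real) \<Rightarrow> bool" where
  "lang_model P \<longleftrightarrow> (\<forall>h v. P h v > 0) \<and> (\<forall>h. (\<Sum>v\<in>UNIV. P h v) = 1)"

text \<open>S h is a set of k tokens with the largest probabilities (ties broken by a fixed
  deterministic rule, i.e. S is an arbitrary fixed function of the history).\<close>
definition is_topk :: "('v::finite list \<Rightarrow> 'v set) \<Rightarrow> ('v list \<Rightarrow> 'v \<Rightarrow> real) \<Rightarrow> nat \<Rightarrow> bool" where
  "is_topk S P k \<longleftrightarrow> (\<forall>h. card (S h) = min k (card (UNIV :: 'v set)) \<and>
      (\<forall>u\<in>S h. \<forall>v. v \<notin> S h \<longrightarrow> P h v \<le> P h u))"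

definition topk_dec :: "('v list \<Rightarrow> 'v set) \<Rightarrow> ('v list \<Rightarrow> 'v \<Rightarrow> real) \<Rightarrow> 'v list \<Rightarrow> 'v \<Rightarrow> real" where
  "topk_dec S P h v = (if v \<in> S h then P h v / (\<Sum>u\<in>S h. P h u) else 0)"

definition seq_prob :: "('v list \<Rightarrow> 'v \<Rightarrow> real) \<Rightarrow> 'v list \<Rightarrow> 'v list \<Rightarrow> real" where
  "seq_prob Q zpre x = (\<Prod>t<length x. Q (zpre @ take t x) (x ! t))"

definition hamming :: "'a list \<Rightarrow> 'a list \<Rightarrow> nat" where
  "hamming b c = card {t. t < length b \<and> b ! t \<noteq> c ! t}"

definition edit_step :: "('a list \<times> 'a list) set" where
  "edit_step = {(u @ w, u @ a # w) | u a w. True}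
             \<union> {(u @ a # w, u @ w) | u a w. True}
             \<union> {(u @ a # w, u @ b # w) | u a b w. a \<noteq> b}"

definition levenshtein :: "'a list \<Rightarrow> 'a list \<Rightarrow> nat" where
  "levenshtein b c = (LEAST n. (b, c) \<in> edit_step ^^ n)"

definition dist_ball :: "('a list \<Rightarrow> 'a list \<Rightarrow> nat) \<Rightarrow> real \<Rightarrow> 'a list \<Rightarrow> 'a list set" where
  "dist_ball d eps zsuf = {v. length v = length zsuf \<and> real (d v zsuf) \<le> eps}"

definition p_mass :: "('v list \<Rightarrow> 'v set) \<Rightarrow> ('v list \<Rightarrow> 'v \<Rightarrow> real) \<Rightarrow>
    ('v list \<Rightarrow> 'v list \<Rightarrow> nat) \<Rightarrow> real \<Rightarrow> 'v list \<Rightarrow> 'v list \<Rightarrow> real" where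
  "p_mass S P d eps zpre zsuf = (\<Sum>v\<in>dist_ball d eps zsuf. seq_prob (topk_dec S P) zpre v)"

text \<open>Selection of (at most) B pairs with largest second coordinate, deterministic tie-breaking
  (sel is an arbitrary fixed function with this property).\<close>
definition top_subset :: "nat \<Rightarrow> ('h \<times> real) set \<Rightarrow> ('h \<times> real) set \<Rightarrow> bool" where
  "top_subset B C F \<longleftrightarrow> F \<subseteq> C \<and> card F = min B (card C) \<and>
      (\<forall>p\<in>F. \<forall>q\<in>C - F. snd q \<le> snd p)"

definition is_top_sel :: "(nat \<Rightarrow> ('h \<times> real) set \<Rightarrow> ('h \<times> real) set) \<Rightarrow> bool" where
  "is_top_sel sel \<longleftrightarrow> (\<forall>B C. finite C \<longrightarrow> top_subset B C (sel B C))"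

definition expand :: "('v list \<Rightarrow> 'v set) \<Rightarrow> ('v list \<Rightarrow> 'v \<Rightarrow> real) \<Rightarrow>
    ('v list \<times> real) set \<Rightarrow> ('v list \<times> real) set" where
  "expand S P L = {(h @ [v], l + ln (topk_dec S P h v)) | h l v. (h, l) \<in> L \<and> v \<in> S h}"

fun beam :: "('v list \<Rightarrow> 'v set) \<Rightarrow> ('v list \<Rightarrow> 'v \<Rightarrow> real) \<Rightarrow>
    (nat \<Rightarrow> ('v list \<times> real) set \<Rightarrow> ('v list \<times> real) set) \<Rightarrow> 'v \<Rightarrow> nat \<Rightarrow> 'v list \<Rightarrow>
    nat \<Rightarrow> ('v list \<times> real) set" where
  "beam S P sel eos B zpre 0 = {(zpre, 0)}"
| "beam S P sel eos B zpre (Suc t) =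
     sel B {p \<in> expand S P (beam S P sel eos B zpre t). last (fst p) \<noteq> eos}"

definition cbs_final :: "('v list \<Rightarrow> 'v set) \<Rightarrow> ('v list \<Rightarrow> 'v \<Rightarrow> real) \<Rightarrow>
    (nat \<Rightarrow> ('v list \<times> real) set \<Rightarrow> ('v list \<times> real) set) \<Rightarrow> 'v \<Rightarrow> nat \<Rightarrow> 'v list \<Rightarrow>
    nat \<Rightarrow> ('v list \<times> real) set" where
  "cbs_final S P sel eos B zpre T = expand S P (beam S P sel eos B zpre (T - 1))"

definition LB :: "('v list \<times> real) set \<Rightarrow> ('v list \<Rightarrow> 'v list \<Rightarrow> nat) \<Rightarrow> real \<Rightarrow>
    'v list \<Rightarrow> 'v list \<Rightarrow> real" where
  "LB C d eps zpre zsuf =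
     (\<Sum>(h, l) \<in> {(h, l) \<in> C. \<exists>x. h = zpre @ x \<and> x \<in> dist_ball d eps zsuf}. exp l)"

end

theory Submission
  imports Defs
begin

text \<open>Every pair (zpre @ x, l) produced by k-CBS carries the exact log-probability
  l = ln Pr(x | zpre) of its suffix under top-k decoding, since each expansion adds the log
  of a positive top-k probability. Hence distinct candidates have distinct suffixes, and
  summing exp l over the candidates in the ball sums the probabilities of distinct ball
  elements, which is at most the ball mass. A subset of the candidates has smaller sum since
  all terms are positive.\<close>

lemma seq_prob_Nil [simp]: "seq_prob Q zpre [] = 1"
  unfolding seq_prob_def by simp

lemma seq_prob_snoc:
  "seq_prob Q zpre (x @ [v]) = seq_prob Q zpre x * Q (zpre @ x) v"
proof -
  have "seq_prob Q zpre (x @ [v]) =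
      (\<Prod>t<length x. Q (zpre @ take t (x @ [v])) ((x @ [v]) ! t)) * Q (zpre @ x) v"
    unfolding seq_prob_def by (simp add: prod.lessThan_Suc)
  also have "(\<Prod>t<length x. Q (zpre @ take t (x @ [v])) ((x @ [v]) ! t)) = seq_prob Q zpre x"
    unfolding seq_prob_def by (rule prod.cong) (auto simp: nth_append)
  finally show ?thesis .
qed

lemma seq_prob_nonneg:
  assumes "\<And>h v. Q h v \<ge> 0"
  shows "seq_prob Q zpre x \<ge> 0"
  unfolding seq_prob_def using assms by (intro prod_nonneg) auto

lemma topk_dec_nonneg:
  assumes "\<And>h v. P h v > 0"
  shows "topk_dec S P h v \<ge> 0"
  unfolding topk_dec_def using assms by (simp add: less_imp_le sum_nonneg)

lemma topk_dec_pos: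
  fixes S :: "'v::finite list \<Rightarrow> 'v set"
  assumes "\<And>h v. P h v > 0" and "v \<in> S h"
  shows "topk_dec S P h v > 0"
proof -
  have "(\<Sum>u\<in>S h. P h u) > 0"
    using assms by (intro sum_pos) auto
  then show ?thesis
    unfolding topk_dec_def using assms by simp
qed

definition log_prob_scored ::
    "('v list \<Rightarrow> 'v \<Rightarrow> real) \<Rightarrow> 'v list \<Rightarrow> ('v list \<times> real) set \<Rightarrow> bool" where
  "log_prob_scored Q zpre L \<longleftrightarrow>
     finite L \<and> (\<forall>(h, l)\<in>L. \<exists>x. h = zpre @ x \<and> exp l = seq_prob Q zpre x)"

lemma log_prob_scoredD:
  assumes "log_prob_scored Q zpre L" and "(h, l) \<in> L"
  obtains x where "h = zpre @ x" and "exp l = seq_prob Q zpre x"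
  using assms unfolding log_prob_scored_def by fast

lemma finite_expand:
  fixes S :: "'v::finite list \<Rightarrow> 'v set"
  assumes "finite L"
  shows "finite (expand S P L)"
proof -
  have "expand S P L =
      (\<lambda>((h, l), v). (h @ [v], l + ln (topk_dec S P h v))) ` (SIGMA p:L. S (fst p))"
    unfolding expand_def by force
  then show ?thesis
    using assms by simp
qed

lemma log_prob_scored_expand:
  fixes S :: "'v::finite list \<Rightarrow> 'v set"
  assumes pos: "\<And>h v. P h v > 0" and scored: "log_prob_scored (topk_dec S P) zpre L"
  shows "log_prob_scored (topk_dec S P) zpre (expand S P L)"
proof -
  have "\<exists>x. h' = zpre @ x \<and> exp l' = seq_prob (topk_dec S P) zpre x"
    if expanded: "(h', l') \<in> expand S P L" for h' l'
  proof -
    obtain h l v where h': "h' = h @ [v]" and l': "l' = l + ln (topk_dec S P h v)"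
      and hl: "(h, l) \<in> L" and v: "v \<in> S h"
      using expanded unfolding expand_def by blast
    obtain x where x: "h = zpre @ x" "exp l = seq_prob (topk_dec S P) zpre x"
      using scored hl by (rule log_prob_scoredD)
    have "topk_dec S P h v > 0"
      using pos v by (rule topk_dec_pos)
    then have "exp l' = exp l * topk_dec S P h v"
      using l' by (simp add: exp_add)
    also have "\<dots> = seq_prob (topk_dec S P) zpre (x @ [v])"
      using x by (simp add: seq_prob_snoc)
    finally show ?thesis
      using h' x(1) by (intro exI[of _ "x @ [v]"]) simp
  qed
  moreover have "finite (expand S P L)"
    using scored finite_expand unfolding log_prob_scored_def by blast
  ultimately show ?thesis
    unfolding log_prob_scored_def by blast
qed

lemma log_prob_scored_beam:
  fixes S :: "'v::finite list \<Rightarrow> 'v set"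
  assumes pos: "\<And>h v. P h v > 0" and sel: "is_top_sel sel"
  shows "log_prob_scored (topk_dec S P) zpre (beam S P sel eos B zpre t)"
proof (induction t)
  case 0
  show ?case
    unfolding log_prob_scored_def by simp
next
  case (Suc t)
  let ?C = "{p \<in> expand S P (beam S P sel eos B zpre t). last (fst p) \<noteq> eos}"
  have "log_prob_scored (topk_dec S P) zpre (expand S P (beam S P sel eos B zpre t))"
    using pos Suc.IH by (rule log_prob_scored_expand)
  then have "log_prob_scored (topk_dec S P) zpre ?C"
    unfolding log_prob_scored_def by auto
  moreover have "sel B ?C \<subseteq> ?C"
    using sel calculation unfolding is_top_sel_def top_subset_def log_prob_scored_def by blast
  ultimately show ?case
    unfolding log_prob_scored_def by (auto intro: finite_subset)
qed

lemma log_prob_scored_cbs_final: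
  fixes S :: "'v::finite list \<Rightarrow> 'v set"
  assumes "\<And>h v. P h v > 0" and "is_top_sel sel"
  shows "log_prob_scored (topk_dec S P) zpre (cbs_final S P sel eos B zpre T)"
  unfolding cbs_final_def using assms by (intro log_prob_scored_expand log_prob_scored_beam)

lemma finite_dist_ball: "finite (dist_ball d eps (zsuf :: 'v::finite list))"
proof (rule finite_subset)
  show "dist_ball d eps zsuf \<subseteq> {v. length v = length zsuf}"
    unfolding dist_ball_def by auto
  show "finite {v :: 'v list. length v = length zsuf}"
    using finite_lists_length_eq[of "UNIV :: 'v set" "length zsuf"] by simp
qed

lemma LB_le_ball_mass:
  fixes zsuf :: "'v::finite list"
  assumes scored: "log_prob_scored Q zpre C" and nonneg: "\<And>h v. Q h v \<ge> 0"
  shows "LB C d eps zpre zsuf \<le> (\<Sum>x\<in>dist_ball d eps zsuf. seq_prob Q zpre x)"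
proof -
  let ?C' = "{(h, l) \<in> C. \<exists>x. h = zpre @ x \<and> x \<in> dist_ball d eps zsuf}"
  let ?suffix = "\<lambda>p :: 'v list \<times> real. drop (length zpre) (fst p)"
  have exp_snd: "exp (snd p) = seq_prob Q zpre (?suffix p)" if "p \<in> C" for p
    using scored that by (cases p) (auto elim: log_prob_scoredD)
  have "inj_on ?suffix ?C'"
  proof (rule inj_onI)
    fix p q
    assume "p \<in> ?C'" "q \<in> ?C'" and eq: "?suffix p = ?suffix q"
    then have "p \<in> C" "q \<in> C" and "fst p = fst q"
      by auto
    moreover have "exp (snd p) = exp (snd q)"
      using exp_snd[OF \<open>p \<in> C\<close>] exp_snd[OF \<open>q \<in> C\<close>] eq by simp
    ultimately show "p = q"
      by (simp add: prod_eq_iff)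
  qed
  have "LB C d eps zpre zsuf = (\<Sum>p\<in>?C'. seq_prob Q zpre (?suffix p))"
    unfolding LB_def case_prod_beta by (rule sum.cong) (auto simp: exp_snd)
  also have "\<dots> = (\<Sum>x\<in>?suffix ` ?C'. seq_prob Q zpre x)"
    using sum.reindex[OF \<open>inj_on ?suffix ?C'\<close>, of "seq_prob Q zpre"] by (simp add: comp_def)
  also have "\<dots> \<le> (\<Sum>x\<in>dist_ball d eps zsuf. seq_prob Q zpre x)"
    using nonneg by (intro sum_mono2 finite_dist_ball seq_prob_nonneg) auto
  finally show ?thesis .
qed

lemma LB_mono:
  assumes "finite C" and "F \<subseteq> C"
  shows "LB F d eps zpre zsuf \<le> LB C d eps zpre zsuf"
  unfolding LB_def using assms by (intro sum_mono2) (auto intro: finite_subset)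

theorem corollary4:
  fixes P :: "'v::finite list \<Rightarrow> 'v \<Rightarrow> real"
    and S :: "'v list \<Rightarrow> 'v set"
    and sel :: "nat \<Rightarrow> ('v list \<times> real) set \<Rightarrow> ('v list \<times> real) set"
    and eos :: 'v and k B :: nat and zpre zsuf :: "'v list"
    and d :: "'v list \<Rightarrow> 'v list \<Rightarrow> nat" and eps :: real
    and F :: "('v list \<times> real) set"
  assumes "lang_model P"
    and "k \<ge> 1"
    and "is_topk S P k"
    and "is_top_sel sel"
    and "length zsuf \<ge> 1"
    and "d \<in> {hamming, levenshtein}"
    and "eps \<ge> 0"
    and "top_subset B (cbs_final S P sel eos B zpre (length zsuf)) F"
  shows "LB (cbs_final S P sel eos B zpre (length zsuf)) d eps zpre zsuf \<le> p_mass S P d eps zpre zsuf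
    \<and> LB F d eps zpre zsuf \<le> LB (cbs_final S P sel eos B zpre (length zsuf)) d eps zpre zsuf"
proof
  let ?C = "cbs_final S P sel eos B zpre (length zsuf)"
  have pos: "\<And>h v. P h v > 0"
    using \<open>lang_model P\<close> unfolding lang_model_def by blast
  have scored: "log_prob_scored (topk_dec S P) zpre ?C"
    using pos \<open>is_top_sel sel\<close> by (rule log_prob_scored_cbs_final)
  show "LB ?C d eps zpre zsuf \<le> p_mass S P d eps zpre zsuf"
    unfolding p_mass_def using scored topk_dec_nonneg[OF pos] by (rule LB_le_ball_mass)
  show "LB F d eps zpre zsuf \<le> LB ?C d eps zpre zsuf"
    using scored \<open>top_subset B ?C F\<close>
    unfolding log_prob_scored_def top_subset_def by (intro LB_mono) auto
qed

end
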